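(* Let $N$ be a positive integer and let $x_1,\dots,x_N$ be real numbers with $0\le x_i\le 1$ for all $i$ and $\sum_{i=1}^N x_i=2$. Let $S$ be the sum of $x_ix_jx_k$ over all triples of indices $i<j<k$ such that $k-i$ is even and $j-i$ is odd. Then $S<1/3$. *)

theory Defs
  imports Main Complex_Main
begin

end

theory Submission
  imports Defs
begin

text \<open>Sweep the indices from left to right. After the first \<open>n\<close> of them, let \<open>A\<close> and \<open>B\<close>
  be the sums of the \<open>x\<^sub>i\<close> with \<open>i\<close> of the same and of the opposite parity as \<open>n\<close>, and let
  \<open>Q\<close> and \<open>R\<close> be the sums of \<open>x\<^sub>i x\<^sub>j\<close> over pairs \<open>i < j\<close> with \<open>j - i\<close> odd and \<open>j\<close> of the
  same resp. opposite parity as \<open>n\<close>; thus \<open>Q + R = A B\<close>. With \<open>T\<close> the partial triple sum,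
  the quantity \<open>24 T + 12 (Q - R)\<^sup>2 / (A + B) + \<Sum> x\<^sub>i\<^sup>3\<close> never exceeds \<open>(A + B)\<^sup>3\<close>:
  appending one index swaps the roles of \<open>Q, R\<close> and \<open>A, B\<close>, and the new defect is a perfect
  square. For \<open>\<Sum> x\<^sub>i = 2\<close> this gives \<open>24 T < 8\<close>.\<close>

definition odd_even_triples :: "nat \<Rightarrow> (nat \<times> nat \<times> nat) set" where
  "odd_even_triples n = {(i, j, k). i \<in> {1..n} \<and> j \<in> {1..n} \<and> k \<in> {1..n} \<and>
     i < j \<and> j < k \<and> even (k - i) \<and> odd (j - i)}"

definition aligned_pairs :: "nat \<Rightarrow> (nat \<times> nat) set" where
  "aligned_pairs n = {(i, j). i \<in> {1..n} \<and> j \<in> {1..n} \<and> i < j \<and> odd (n - i) \<and> even (n - j)}"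

definition misaligned_pairs :: "nat \<Rightarrow> (nat \<times> nat) set" where
  "misaligned_pairs n = {(i, j). i \<in> {1..n} \<and> j \<in> {1..n} \<and> i < j \<and> even (n - i) \<and> odd (n - j)}"

definition aligned_indices :: "nat \<Rightarrow> nat set" where
  "aligned_indices n = {i \<in> {1..n}. even (n - i)}"

definition misaligned_indices :: "nat \<Rightarrow> nat set" where
  "misaligned_indices n = {i \<in> {1..n}. odd (n - i)}"

definition triple_sum :: "(nat \<Rightarrow> real) \<Rightarrow> nat \<Rightarrow> real" where
  "triple_sum x n = (\<Sum>(i, j, k) \<in> odd_even_triples n. x i * x j * x k)"

definition aligned_pair_sum :: "(nat \<Rightarrow> real) \<Rightarrow> nat \<Rightarrow> real" where
  "aligned_pair_sum x n = (\<Sum>(i, j) \<in> aligned_pairs n. x i * x j)"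

definition misaligned_pair_sum :: "(nat \<Rightarrow> real) \<Rightarrow> nat \<Rightarrow> real" where
  "misaligned_pair_sum x n = (\<Sum>(i, j) \<in> misaligned_pairs n. x i * x j)"

definition aligned_sum :: "(nat \<Rightarrow> real) \<Rightarrow> nat \<Rightarrow> real" where
  "aligned_sum x n = sum x (aligned_indices n)"

definition misaligned_sum :: "(nat \<Rightarrow> real) \<Rightarrow> nat \<Rightarrow> real" where
  "misaligned_sum x n = sum x (misaligned_indices n)"

lemma finite_odd_even_triples: "finite (odd_even_triples n)"
  by (rule finite_subset[of _ "{1..n} \<times> {1..n} \<times> {1..n}"]) (auto simp: odd_even_triples_def)

lemma finite_aligned_pairs: "finite (aligned_pairs n)"
  by (rule finite_subset[of _ "{1..n} \<times> {1..n}"]) (auto simp: aligned_pairs_def)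

lemma finite_misaligned_pairs: "finite (misaligned_pairs n)"
  by (rule finite_subset[of _ "{1..n} \<times> {1..n}"]) (auto simp: misaligned_pairs_def)

lemma odd_even_triples_0: "odd_even_triples 0 = {}"
  and aligned_pairs_0: "aligned_pairs 0 = {}"
  and misaligned_pairs_0: "misaligned_pairs 0 = {}"
  and aligned_indices_0: "aligned_indices 0 = {}"
  and misaligned_indices_0: "misaligned_indices 0 = {}"
  by (auto simp: odd_even_triples_def aligned_pairs_def misaligned_pairs_def
      aligned_indices_def misaligned_indices_def)

lemma odd_even_triples_Suc:
  "odd_even_triples (Suc n) = odd_even_triples n \<union> (\<lambda>(i, j). (i, j, Suc n)) ` aligned_pairs n"
  unfolding odd_even_triples_def aligned_pairs_def by (auto simp: image_def; presburger)

lemma aligned_pairs_Suc: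
  "aligned_pairs (Suc n) = misaligned_pairs n \<union> (\<lambda>i. (i, Suc n)) ` aligned_indices n"
  unfolding aligned_pairs_def misaligned_pairs_def aligned_indices_def
  by (auto simp: image_def; presburger)

lemma misaligned_pairs_Suc: "misaligned_pairs (Suc n) = aligned_pairs n"
  unfolding aligned_pairs_def misaligned_pairs_def by (auto; presburger)

lemma aligned_indices_Suc: "aligned_indices (Suc n) = insert (Suc n) (misaligned_indices n)"
  unfolding aligned_indices_def misaligned_indices_def by (auto; presburger)

lemma misaligned_indices_Suc: "misaligned_indices (Suc n) = aligned_indices n"
  unfolding aligned_indices_def misaligned_indices_def by (auto; presburger)

lemma triple_sum_0: "triple_sum x 0 = 0"
  and aligned_pair_sum_0: "aligned_pair_sum x 0 = 0"
  and misaligned_pair_sum_0: "misaligned_pair_sum x 0 = 0"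
  and aligned_sum_0: "aligned_sum x 0 = 0"
  and misaligned_sum_0: "misaligned_sum x 0 = 0"
  by (simp_all add: triple_sum_def aligned_pair_sum_def misaligned_pair_sum_def aligned_sum_def
      misaligned_sum_def odd_even_triples_0 aligned_pairs_0 misaligned_pairs_0
      aligned_indices_0 misaligned_indices_0)

lemma triple_sum_Suc:
  "triple_sum x (Suc n) = triple_sum x n + x (Suc n) * aligned_pair_sum x n"
proof -
  let ?e = "\<lambda>(i, j). (i, j, Suc n)"
  have disjoint: "odd_even_triples n \<inter> ?e ` aligned_pairs n = {}"
    by (auto simp: odd_even_triples_def)
  have "triple_sum x (Suc n)
      = triple_sum x n + (\<Sum>(i, j, k) \<in> ?e ` aligned_pairs n. x i * x j * x k)"
    unfolding triple_sum_def odd_even_triples_Suc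
    by (rule sum.union_disjoint) (auto simp: finite_odd_even_triples finite_aligned_pairs disjoint)
  also have "(\<Sum>(i, j, k) \<in> ?e ` aligned_pairs n. x i * x j * x k)
      = (\<Sum>(i, j) \<in> aligned_pairs n. x i * x j * x (Suc n))"
    by (subst sum.reindex) (auto simp: inj_on_def intro!: sum.cong)
  also have "\<dots> = x (Suc n) * aligned_pair_sum x n"
    unfolding aligned_pair_sum_def sum_distrib_left by (auto intro!: sum.cong)
  finally show ?thesis .
qed

lemma aligned_pair_sum_Suc:
  "aligned_pair_sum x (Suc n) = misaligned_pair_sum x n + x (Suc n) * aligned_sum x n"
proof -
  let ?e = "\<lambda>i. (i, Suc n)"
  have disjoint: "misaligned_pairs n \<inter> ?e ` aligned_indices n = {}"
    by (auto simp: misaligned_pairs_def)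
  have finite_indices: "finite (aligned_indices n)"
    by (simp add: aligned_indices_def)
  have "aligned_pair_sum x (Suc n)
      = misaligned_pair_sum x n + (\<Sum>(i, j) \<in> ?e ` aligned_indices n. x i * x j)"
    unfolding aligned_pair_sum_def misaligned_pair_sum_def aligned_pairs_Suc
    by (rule sum.union_disjoint)
      (auto simp: finite_misaligned_pairs finite_indices disjoint)
  also have "(\<Sum>(i, j) \<in> ?e ` aligned_indices n. x i * x j) = x (Suc n) * aligned_sum x n"
    unfolding aligned_sum_def sum_distrib_left
    by (subst sum.reindex) (auto simp: inj_on_def intro!: sum.cong)
  finally show ?thesis .
qed

lemma misaligned_pair_sum_Suc: "misaligned_pair_sum x (Suc n) = aligned_pair_sum x n"
  by (simp add: misaligned_pair_sum_def aligned_pair_sum_def misaligned_pairs_Suc)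

lemma aligned_sum_Suc: "aligned_sum x (Suc n) = x (Suc n) + misaligned_sum x n"
  unfolding aligned_sum_def misaligned_sum_def aligned_indices_Suc
  by (rule sum.insert) (auto simp: misaligned_indices_def)

lemma misaligned_sum_Suc: "misaligned_sum x (Suc n) = aligned_sum x n"
  by (simp add: aligned_sum_def misaligned_sum_def misaligned_indices_Suc)

lemma aligned_plus_misaligned_sum: "aligned_sum x n + misaligned_sum x n = (\<Sum>i=1..n. x i)"
  by (induction n)
    (auto simp: aligned_sum_0 misaligned_sum_0 aligned_sum_Suc misaligned_sum_Suc sum.cl_ivl_Suc)

lemma aligned_plus_misaligned_pair_sum:
  "aligned_pair_sum x n + misaligned_pair_sum x n = aligned_sum x n * misaligned_sum x n"
  by (induction n)
    (auto simp: aligned_pair_sum_0 misaligned_pair_sum_0 aligned_sum_0 misaligned_sum_0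
      aligned_pair_sum_Suc misaligned_pair_sum_Suc aligned_sum_Suc misaligned_sum_Suc
      algebra_simps)

context
  fixes x :: "nat \<Rightarrow> real" and n :: nat
  assumes nonneg: "\<And>i. i \<in> {1..n} \<Longrightarrow> 0 \<le> x i"
begin

lemma aligned_sum_nonneg: "0 \<le> aligned_sum x n"
  using nonneg by (auto simp: aligned_sum_def aligned_indices_def intro!: sum_nonneg)

lemma misaligned_sum_nonneg: "0 \<le> misaligned_sum x n"
  using nonneg by (auto simp: misaligned_sum_def misaligned_indices_def intro!: sum_nonneg)

lemma aligned_pair_sum_nonneg: "0 \<le> aligned_pair_sum x n"
  using nonneg by (auto simp: aligned_pair_sum_def aligned_pairs_def intro!: sum_nonneg)

lemma misaligned_pair_sum_nonneg: "0 \<le> misaligned_pair_sum x n"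
  using nonneg by (auto simp: misaligned_pair_sum_def misaligned_pairs_def intro!: sum_nonneg)

end

text \<open>Multiplied by \<open>(a + b) (a + b + t)\<close>, the difference of the two sides is
  \<open>3 t ((a + b) (a - b - t) + 2 (q - r))\<^sup>2\<close>.\<close>

lemma sweep_step_inequality:
  fixes a b q r t :: real
  assumes "0 \<le> a" "0 \<le> b" "0 \<le> t" "0 \<le> q" "0 \<le> r" "q + r = a * b"
  shows "24 * t * q + 12 * (r + t * a - q)\<^sup>2 / (a + b + t) + t ^ 3
         \<le> (a + b + t) ^ 3 - (a + b) ^ 3 + 12 * (q - r)\<^sup>2 / (a + b)"
proof (cases "a + b = 0")
  case True
  with assms have "a = 0" "b = 0" by auto
  with assms have "q = 0" "r = 0" by auto
  with \<open>a = 0\<close> \<open>b = 0\<close> show ?thesis by simp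
next
  case False
  define s where "s = a + b"
  have "0 < s" "0 < s + t" using False assms by (auto simp: s_def)
  have "((s + t) ^ 3 - s ^ 3 + 12 * (q - r)\<^sup>2 / s
         - (24 * t * q + 12 * (r + t * a - q)\<^sup>2 / (s + t) + t ^ 3)) * (s * (s + t))
      = ((s + t) ^ 3 - s ^ 3 - 24 * t * q - t ^ 3) * (s * (s + t))
         + 12 * (q - r)\<^sup>2 * (s + t) - 12 * (r + t * a - q)\<^sup>2 * s"
    using \<open>0 < s\<close> \<open>0 < s + t\<close> by (simp add: divide_simps) (simp add: algebra_simps)
  also have "\<dots> = 3 * t * (s * (a - b - t) + 2 * (q - r))\<^sup>2"
    using assms(6) unfolding s_def by algebra
  finally have "0 \<le> ((s + t) ^ 3 - s ^ 3 + 12 * (q - r)\<^sup>2 / s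
         - (24 * t * q + 12 * (r + t * a - q)\<^sup>2 / (s + t) + t ^ 3)) * (s * (s + t))"
    (is "0 \<le> ?defect * _")
    using assms(3) by simp
  then have "0 \<le> ?defect"
    using mult_pos_pos[OF \<open>0 < s\<close> \<open>0 < s + t\<close>] by (simp add: zero_le_mult_iff)
  then show ?thesis unfolding s_def by (simp add: add.assoc)
qed

lemma sweep_invariant:
  assumes "\<And>i. i \<in> {1..n} \<Longrightarrow> 0 \<le> x i"
  shows "24 * triple_sum x n
           + 12 * (aligned_pair_sum x n - misaligned_pair_sum x n)\<^sup>2 / (\<Sum>i=1..n. x i)
           + (\<Sum>i=1..n. x i ^ 3)
         \<le> (\<Sum>i=1..n. x i) ^ 3"
  using assms
proof (induction n)
  case 0
  then show ?case by (simp add: triple_sum_0 aligned_pair_sum_0 misaligned_pair_sum_0)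
next
  case (Suc n)
  let ?T = "triple_sum x n" and ?Q = "aligned_pair_sum x n" and ?R = "misaligned_pair_sum x n"
    and ?A = "aligned_sum x n" and ?B = "misaligned_sum x n" and ?t = "x (Suc n)"
    and ?S = "\<Sum>i=1..n. x i"
  have nonneg: "\<And>i. i \<in> {1..n} \<Longrightarrow> 0 \<le> x i" using Suc.prems by auto
  have "24 * ?t * ?Q + 12 * (?R + ?t * ?A - ?Q)\<^sup>2 / (?A + ?B + ?t) + ?t ^ 3
      \<le> (?A + ?B + ?t) ^ 3 - (?A + ?B) ^ 3 + 12 * (?Q - ?R)\<^sup>2 / (?A + ?B)"
    using aligned_sum_nonneg[OF nonneg] misaligned_sum_nonneg[OF nonneg]
      aligned_pair_sum_nonneg[OF nonneg] misaligned_pair_sum_nonneg[OF nonneg] Suc.prems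
    by (intro sweep_step_inequality) (auto simp: aligned_plus_misaligned_pair_sum)
  then have step: "24 * ?t * ?Q + 12 * (?R + ?t * ?A - ?Q)\<^sup>2 / (?S + ?t) + ?t ^ 3
      \<le> (?S + ?t) ^ 3 - ?S ^ 3 + 12 * (?Q - ?R)\<^sup>2 / ?S"
    unfolding aligned_plus_misaligned_sum .
  have "24 * triple_sum x (Suc n)
          + 12 * (aligned_pair_sum x (Suc n) - misaligned_pair_sum x (Suc n))\<^sup>2
            / (\<Sum>i=1..Suc n. x i)
          + (\<Sum>i=1..Suc n. x i ^ 3)
      = 24 * ?T + 24 * ?t * ?Q + 12 * (?R + ?t * ?A - ?Q)\<^sup>2 / (?S + ?t)
          + (\<Sum>i=1..n. x i ^ 3) + ?t ^ 3"
    by (simp add: triple_sum_Suc aligned_pair_sum_Suc misaligned_pair_sum_Suc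
        sum.cl_ivl_Suc algebra_simps)
  also have "\<dots> \<le> (?S + ?t) ^ 3"
    using Suc.IH[OF nonneg] step by linarith
  finally show ?case by (simp add: sum.cl_ivl_Suc add.commute)
qed

lemma triple_sum_bound:
  assumes "\<And>i. i \<in> {1..n} \<Longrightarrow> 0 \<le> x i"
  shows "24 * triple_sum x n + (\<Sum>i=1..n. x i ^ 3) \<le> (\<Sum>i=1..n. x i) ^ 3"
proof -
  have "0 \<le> (\<Sum>i=1..n. x i)" using assms by (intro sum_nonneg) auto
  then have "0 \<le> 12 * (aligned_pair_sum x n - misaligned_pair_sum x n)\<^sup>2 / (\<Sum>i=1..n. x i)"
    by simp
  with sweep_invariant[of n x, OF assms] show ?thesis by linarith
qed

lemma sum_cubes_pos:
  fixes x :: "'a \<Rightarrow> real"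
  assumes "finite I" "\<And>i. i \<in> I \<Longrightarrow> 0 \<le> x i" "0 < sum x I"
  shows "0 < (\<Sum>i\<in>I. x i ^ 3)"
proof -
  obtain i where "i \<in> I" "0 < x i"
    using assms(3) sum_nonpos[of I x] by (meson not_less)
  then have "0 < x i ^ 3" by simp
  also have "\<dots> \<le> (\<Sum>i\<in>I. x i ^ 3)"
    using assms \<open>i \<in> I\<close> by (intro member_le_sum) auto
  finally show ?thesis .
qed

theorem lemma2:
  fixes N :: nat and x :: "nat \<Rightarrow> real"
  assumes "N \<ge> 1"
    and "\<And>i. i \<in> {1..N} \<Longrightarrow> 0 \<le> x i \<and> x i \<le> 1"
    and "(\<Sum>i=1..N. x i) = 2"
  shows "(\<Sum>(i, j, k) \<in> {(i, j, k). i \<in> {1..N} \<and> j \<in> {1..N} \<and> k \<in> {1..N} \<and>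
            i < j \<and> j < k \<and> even (k - i) \<and> odd (j - i)}. x i * x j * x k) < 1 / 3"
proof -
  have nonneg: "\<And>i. i \<in> {1..N} \<Longrightarrow> 0 \<le> x i" using assms(2) by auto
  have "24 * triple_sum x N + (\<Sum>i=1..N. x i ^ 3) \<le> 8"
    using triple_sum_bound[of N x] nonneg assms(3) by simp
  moreover have "0 < (\<Sum>i=1..N. x i ^ 3)"
    using nonneg assms(3) by (intro sum_cubes_pos) auto
  ultimately have "triple_sum x N < 1 / 3" by linarith
  then show ?thesis by (simp add: triple_sum_def odd_even_triples_def)
qed

end
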